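(* For every positive integer $l$, the set of all positive eigenvalues of the adjacency matrix of the double subdivided star $T_{l,l}$, with any one of them removed, is linearly independent over $\mathbb{Q}$.
   Context: A subdivided star $SK_{1,l}$ is obtained by identifying exactly one pendant (end) vertex from each of $l$ copies of the path $P_3$; the identified vertex is the coalescence vertex. The double subdivided star $T_{l,m}$ is obtained from $SK_{1,l}$ and $SK_{1,m}$ by adding one edge joining their two coalescence vertices. *)

theory Defs
  imports "Jordan_Normal_Form.Char_Poly"
begin

text \<open>Double subdivided star T_{l,m} on vertex set {0..<2+2l+2m}:
  0 = coalescence vertex of SK_{1,l}, 1 = coalescence vertex of SK_{1,m};
  for i < l: paths 0 - (2+i) - (2+l+i);
  for j < m: paths 1 - (2+2l+j) - (2+2l+m+j);
  plus the edge 0 - 1.\<close>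

definition dss_edge0 :: "nat \<Rightarrow> nat \<Rightarrow> nat \<Rightarrow> nat \<Rightarrow> bool" where
  "dss_edge0 l m u v \<longleftrightarrow>
     (u = 0 \<and> v = 1)
   \<or> (\<exists>i<l. (u = 0 \<and> v = 2 + i) \<or> (u = 2 + i \<and> v = 2 + l + i))
   \<or> (\<exists>j<m. (u = 1 \<and> v = 2 + 2*l + j) \<or> (u = 2 + 2*l + j \<and> v = 2 + 2*l + m + j))"

definition dss_adj :: "nat \<Rightarrow> nat \<Rightarrow> nat \<Rightarrow> nat \<Rightarrow> bool" where
  "dss_adj l m u v \<longleftrightarrow> dss_edge0 l m u v \<or> dss_edge0 l m v u"

definition dss_adj_mat :: "nat \<Rightarrow> nat \<Rightarrow> real mat" where
  "dss_adj_mat l m = mat (2 + 2*l + 2*m) (2 + 2*l + 2*m)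
     (\<lambda>(u, v). if dss_adj l m u v then 1 else 0)"

definition rat_lin_indep :: "real set \<Rightarrow> bool" where
  "rat_lin_indep S \<longleftrightarrow> (\<forall>T c. T \<subseteq> S \<longrightarrow> finite T \<longrightarrow>
      (\<Sum>x\<in>T. of_rat (c x) * x) = 0 \<longrightarrow> (\<forall>x\<in>T. c x = 0))"

end

(* Let k be an eigenvalue of T_{l,l} with k^2 \<noteq> 1. Along each pendant path an eigenvector is
   determined by its value at the coalescence vertex; eliminating the paths leaves a 2x2 system for
   the two coalescence values whose determinant is p(k) p(-k), where p(x) = x^3 - x^2 - (l+1) x + 1.
   So the positive eigenvalues lie among 1, the positive roots r2, r3 of p, and -r1 = r2 + r3 - 1.
   Since p has no rational root, 1, r2, r3 are linearly independent over Q (writing r3 = a + b r2 and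
   reducing p(r3) = 0 modulo p(r2) = 0 forces b = 1, a = 0). Hence the only rational relation among
   1, r2, r3, r2 + r3 - 1 involves all four numbers, and dropping any one of them breaks it. *)

theory Submission
  imports Defs
begin

definition cubic :: "rat \<Rightarrow> rat \<Rightarrow> rat \<Rightarrow> 'a::field_char_0 \<Rightarrow> 'a" where
  "cubic e f g x = x^3 + of_rat e * x^2 + of_rat f * x + of_rat g"

lemma cubic_of_rat: "cubic e f g (of_rat q) = of_rat (cubic e f g q)"
  by (simp add: cubic_def of_rat_add of_rat_mult of_rat_power)

lemma cubic_root_notin_Rats:
  assumes "\<And>q::rat. cubic e f g q \<noteq> 0" and "cubic e f g r = 0"
  shows "r \<notin> \<rat>"
proof
  assume "r \<in> \<rat>"
  then obtain q where "r = of_rat q" by (auto elim: Rats_cases)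
  with assms show False by (metis cubic_of_rat of_rat_eq_0_iff)
qed

lemma cubic_root_powers_rat_independent:
  fixes r :: "'a::field_char_0"
  assumes no_rat_root: "\<And>q::rat. cubic e f g q \<noteq> 0" and root: "cubic e f g r = 0"
    and rel: "of_rat A + of_rat B * r + of_rat C * r^2 = 0"
  shows "A = 0 \<and> B = 0 \<and> C = 0"
proof -
  have r_irrat: "r \<notin> \<rat>" using cubic_root_notin_Rats[OF assms(1,2)] .
  have linear: "A = 0 \<and> B = 0" if "of_rat A + of_rat B * r = 0" for A B
  proof (cases "B = 0")
    case False
    with that have "r = of_rat (- A / B)"
      by (simp add: of_rat_divide of_rat_minus field_simps eq_neg_iff_add_eq_0 add.commute)
    with r_irrat show ?thesis by simp
  qed (use that in simp)
  have "C = 0"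
  proof (rule ccontr)
    assume C: "C \<noteq> 0"
    define x y where "x = A / C" and "y = B / C"
    have quad: "r^2 + of_rat y * r + of_rat x = 0"
      using rel C by (simp add: x_def y_def of_rat_divide field_simps)
    \<comment> \<open>Dividing the cubic by this rational quadratic leaves a rational linear remainder in r.\<close>
    have "cubic e f g r = (r + of_rat (e - y)) * (r^2 + of_rat y * r + of_rat x)
        + (of_rat (g - (e - y) * x) + of_rat (f - x - (e - y) * y) * r)"
      by (simp add: cubic_def of_rat_add of_rat_diff of_rat_mult algebra_simps power2_eq_square power3_eq_cube)
    then have "of_rat (g - (e - y) * x) + of_rat (f - x - (e - y) * y) * r = 0"
      using root quad by simp
    then have "g - (e - y) * x = 0 \<and> f - x - (e - y) * y = 0"
      by (rule linear)
    moreover have "cubic e f g (y - e) = (g - (e - y) * x) + (f - x - (e - y) * y) * (y - e)"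
      by (simp add: cubic_def algebra_simps power2_eq_square power3_eq_cube)
    ultimately have "cubic e f g (y - e) = 0"
      by simp
    with no_rat_root show False by blast
  qed
  with rel linear show ?thesis by simp
qed

lemma cubic_roots_rat_independent:
  fixes r t :: "'a::field_char_0"
  assumes no_rat_root: "\<And>q::rat. cubic e f g q \<noteq> 0"
    and r: "cubic e f g r = 0" and t: "cubic e f g t = 0" and "r \<noteq> t"
    and rel: "of_rat A + of_rat B * r + of_rat C * t = 0"
  shows "A = 0 \<and> B = 0 \<and> C = 0"
proof -
  have "C = 0"
  proof (rule ccontr)
    assume C: "C \<noteq> 0"
    define a b where "a = - A / C" and "b = - B / C"
    have t_affine: "t = of_rat a + of_rat b * r"
      using rel C by (simp add: a_def b_def of_rat_divide of_rat_minus field_simps add_eq_0_iff)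
    \<comment> \<open>Subtracting b^3 times the equation of r from that of t leaves a rational quadratic in r.\<close>
    have "cubic e f g (of_rat a + of_rat b * r) - of_rat (b^3) * cubic e f g r
        = of_rat (a^3 + e*a^2 + f*a + g - g*b^3) + of_rat (b * (3*a^2 + 2*e*a + f - f*b^2)) * r
          + of_rat (b^2 * (3*a + e - e*b)) * r^2"
      by (simp add: cubic_def of_rat_add of_rat_diff of_rat_mult of_rat_power
          algebra_simps power2_eq_square power3_eq_cube)
    then have "of_rat (a^3 + e*a^2 + f*a + g - g*b^3) + of_rat (b * (3*a^2 + 2*e*a + f - f*b^2)) * r
          + of_rat (b^2 * (3*a + e - e*b)) * r^2 = 0"
      using r t t_affine by simp
    from cubic_root_powers_rat_independent[OF no_rat_root r this]
    have c0: "a^3 + e*a^2 + f*a + g - g*b^3 = 0"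
      and c1: "b * (3*a^2 + 2*e*a + f - f*b^2) = 0"
      and c2: "b^2 * (3*a + e - e*b) = 0"
      by auto
    have "b \<noteq> 0"
    proof
      assume "b = 0"
      then have "t \<in> \<rat>" using t_affine by simp
      with cubic_root_notin_Rats[OF no_rat_root t] show False ..
    qed
    with c2 have "3*a + e - e*b = 0" by simp
    then have a: "a = e * (b - 1) / 3" by (simp add: algebra_simps)
    have "3 * (3*a^2 + 2*e*a + f - f*b^2) = (b - 1) * (b + 1) * (e^2 - 3*f)"
      unfolding a by (simp add: field_simps power2_eq_square)
    with c1 \<open>b \<noteq> 0\<close> have "b = 1 \<or> b = -1 \<or> e^2 = 3*f" by auto
    \<comment> \<open>In the last two cases c0 is a multiple of the value of the cubic at the rational point -e/3.\<close>
    moreover have "b \<noteq> -1"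
    proof
      assume "b = -1"
      then have "a^3 + e*a^2 + f*a + g - g*b^3 = 2 * cubic e f g (- e / 3)"
        unfolding a by (simp add: cubic_def field_simps power2_eq_square power3_eq_cube)
      with c0 no_rat_root show False by simp
    qed
    moreover have "b = 1" if "e^2 = 3*f"
    proof -
      have "a^3 + e*a^2 + f*a + g - g*b^3 = (1 - b^3) * cubic e f g (- e / 3)"
        unfolding a using that by (simp add: cubic_def field_simps power2_eq_square power3_eq_cube)
      with c0 no_rat_root have b3: "b^3 = 1^3" by simp
      then have "0 \<le> b" using zero_le_odd_power[of 3 b] by simp
      with b3 show ?thesis using power_eq_iff_eq_base[of 3 b 1] by simp
    qed
    ultimately have "b = 1" by blast
    with a t_affine \<open>r \<noteq> t\<close> show False by simp
  qed
  with rel have "of_rat A + of_rat B * r + of_rat 0 * r^2 = 0" by simp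
  from cubic_root_powers_rat_independent[OF no_rat_root r this] \<open>C = 0\<close> show ?thesis by simp
qed

lemma cubic_distinct_roots_sum:
  fixes a b c :: "'a::field_char_0"
  assumes "cubic e f g a = 0" "cubic e f g b = 0" "cubic e f g c = 0"
    and "a \<noteq> b" "a \<noteq> c" "b \<noteq> c"
  shows "a + b + c = - of_rat e"
proof -
  define E F where "E = (of_rat e :: 'a)" and "F = (of_rat f :: 'a)"
  have difference: "cubic e f g x - cubic e f g y = (x - y) * (x^2 + x*y + y^2 + E*(x + y) + F)" for x y :: 'a
    by (simp add: cubic_def E_def F_def algebra_simps power2_eq_square power3_eq_cube)
  have "a^2 + a*b + b^2 + E*(a + b) + F = 0" "a^2 + a*c + c^2 + E*(a + c) + F = 0"
    using difference[of a b] difference[of a c] assms by auto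
  moreover have "(a^2 + a*b + b^2 + E*(a + b) + F) - (a^2 + a*c + c^2 + E*(a + c) + F)
      = (b - c) * (a + b + c + E)"
    by (simp add: algebra_simps power2_eq_square)
  ultimately show ?thesis using \<open>b \<noteq> c\<close> by (simp add: E_def eq_neg_iff_add_eq_0)
qed

lemma rat_lin_indep_mono: "rat_lin_indep S \<Longrightarrow> T \<subseteq> S \<Longrightarrow> rat_lin_indep T"
  unfolding rat_lin_indep_def by blast

lemma rat_lin_indep_finiteI:
  assumes "finite S" and "\<And>c. (\<Sum>x\<in>S. of_rat (c x) * x) = 0 \<Longrightarrow> \<forall>x\<in>S. c x = 0"
  shows "rat_lin_indep S"
  unfolding rat_lin_indep_def
proof (intro allI impI)
  fix T c assume "T \<subseteq> S" "finite T" and rel: "(\<Sum>x\<in>T. of_rat (c x) * x) = 0"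
  define d where "d x = (if x \<in> T then c x else 0)" for x
  have "(\<Sum>x\<in>S. of_rat (d x) * x) = (\<Sum>x\<in>T. of_rat (d x) * x)"
    by (rule sum.mono_neutral_right) (use \<open>T \<subseteq> S\<close> \<open>finite S\<close> in \<open>auto simp: d_def\<close>)
  also have "\<dots> = 0"
    using rel by (simp add: d_def)
  finally have "\<forall>x\<in>S. d x = 0" by (rule assms(2))
  with \<open>T \<subseteq> S\<close> show "\<forall>x\<in>T. c x = 0"
    by (force simp: d_def)
qed

lemma rat_lin_indep_remove_one:
  fixes r t :: real
  assumes indep: "\<And>A B C. of_rat A + of_rat B * r + of_rat C * t = 0 \<Longrightarrow> A = 0 \<and> B = 0 \<and> C = 0"
    and \<mu>: "\<mu> \<in> {1, r, t, r + t - 1}"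
  shows "rat_lin_indep ({1, r, t, r + t - 1} - {\<mu>})"
proof (rule rat_lin_indep_finiteI)
  define s where "s = r + t - 1"
  have "1 \<noteq> r" using indep[of 1 "-1" 0] by auto
  moreover have "1 \<noteq> t" using indep[of 1 0 "-1"] by auto
  moreover have "r \<noteq> t" using indep[of 0 1 "-1"] by auto
  moreover have "s \<noteq> 1" using indep[of "-2" 1 1] by (auto simp: s_def)
  moreover have "s \<noteq> r" using indep[of "-1" 0 1] by (auto simp: s_def)
  moreover have "s \<noteq> t" using indep[of "-1" 1 0] by (auto simp: s_def)
  ultimately have distinct: "distinct [1, r, t, s]" by auto
  \<comment> \<open>Up to scaling, the only rational relation is 1 - r - t + (r + t - 1) = 0, with no zero coefficient.\<close>
  fix c assume rel: "(\<Sum>x\<in>{1, r, t, r + t - 1} - {\<mu>}. of_rat (c x) * x) = 0"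
  define d where "d x = (if x = \<mu> then 0 else c x)" for x
  have "(\<Sum>x\<in>{1, r, t, s}. of_rat (d x) * x) = 0"
    using rel \<mu> by (simp add: s_def d_def sum.remove[of "{1, r, t, r + t - 1}" \<mu>])
  then have "of_rat (d 1) + of_rat (d r) * r + of_rat (d t) * t + of_rat (d s) * (r + t - 1) = 0"
    using distinct by (simp add: s_def add.assoc)
  then have "of_rat (d 1 - d s) + of_rat (d r + d s) * r + of_rat (d t + d s) * t = 0"
    by (simp add: of_rat_add of_rat_diff algebra_simps)
  from indep[OF this] have "d 1 = d s" "d r = - d s" "d t = - d s" by auto
  moreover have "d \<mu> = 0" by (simp add: d_def)
  ultimately have "d s = 0" using \<mu> by (auto simp: s_def)
  with \<open>d 1 = d s\<close> \<open>d r = - d s\<close> \<open>d t = - d s\<close> show "\<forall>x\<in>{1, r, t, r + t - 1} - {\<mu>}. c x = 0"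
    by (auto simp: d_def s_def split: if_splits)
qed simp

lemma pendant_path_eigen:
  fixes k hub mid leaf :: real
  assumes "hub + leaf = k * mid" "mid = k * leaf"
  shows "(k^2 - 1) * leaf = hub" "(k^2 - 1) * mid = k * hub"
proof -
  show leaf: "(k^2 - 1) * leaf = hub"
    using assms by (simp add: algebra_simps power2_eq_square)
  show "(k^2 - 1) * mid = k * hub"
    unfolding assms(2) leaf[symmetric] by (simp add: algebra_simps)
qed

lemma hub_eigen:
  fixes k :: real and x :: "'a \<Rightarrow> real"
  assumes "finite W" "other + (\<Sum>w\<in>W. x w) = k * hub"
    and "\<And>w. w \<in> W \<Longrightarrow> (k^2 - 1) * x w = k * hub"
  shows "(k^3 - (real (card W) + 1) * k) * hub = (k^2 - 1) * other"
proof -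
  have "(k^2 - 1) * (\<Sum>w\<in>W. x w) = real (card W) * (k * hub)"
    using assms(3) by (simp add: sum_distrib_left)
  then have "(k^2 - 1) * (k * hub) = (k^2 - 1) * other + real (card W) * (k * hub)"
    using arg_cong[OF assms(2), of "\<lambda>y. (k^2 - 1) * y"] by (simp add: algebra_simps)
  then show ?thesis by (simp add: algebra_simps power2_eq_square power3_eq_cube)
qed

definition dss_cubic :: "nat \<Rightarrow> 'a::field_char_0 \<Rightarrow> 'a" where
  "dss_cubic l = cubic (-1) (- of_nat l - 1) 1"

lemma dss_cubic_eq: "dss_cubic l x = x^3 - x^2 - (of_nat l + 1) * x + 1"
  by (simp add: dss_cubic_def cubic_def of_rat_diff of_rat_minus algebra_simps)

lemma dss_cubic_no_rat_root:
  assumes "l \<ge> 1"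
  shows "dss_cubic l (q::rat) \<noteq> 0"
proof
  assume root: "dss_cubic l q = 0"
  obtain a b where q: "quotient_of q = (a, b)" by fastforce
  have "b > 0" "coprime a b" and q_frac: "q = of_int a / of_int b"
    using quotient_of_denom_pos[OF q] quotient_of_coprime[OF q] quotient_of_div[OF q] by auto
  then have "of_int (a^3 - a^2*b - (int l + 1)*a*b^2 + b^3) = of_int b ^ 3 * dss_cubic l q"
    unfolding q_frac by (simp add: dss_cubic_eq field_simps power2_eq_square power3_eq_cube)
  with root have int_root: "a^3 - a^2*b - (int l + 1)*a*b^2 + b^3 = 0"
    by (simp only: mult_zero_right of_int_eq_0_iff)
  \<comment> \<open>Rational root theorem: the denominator divides the leading and the numerator the constant coefficient.\<close>
  have "a^3 = b * (a^2 + (int l + 1)*a*b - b^2)"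
    using int_root by (simp add: algebra_simps power2_eq_square power3_eq_cube)
  then have "b dvd a^3" by simp
  moreover have "coprime b (a^3)" using \<open>coprime a b\<close> by (simp add: coprime_commute)
  ultimately have "b dvd 1" using coprime_common_divisor[of b "a^3" b] by simp
  with \<open>b > 0\<close> have b1: "b = 1" using zdvd1_eq[of b] by simp
  have "1 = a * (a + int l + 1 - a^2)"
    using int_root unfolding b1 by (simp add: algebra_simps power2_eq_square power3_eq_cube)
  then have "a dvd 1" by (metis dvd_triv_left)
  then have "a = 1 \<or> a = -1" using zdvd1_eq by auto
  with int_root b1 assms show False by auto
qed

lemma dss_cubic_roots:
  assumes "l \<ge> 1"
  obtains r1 r2 r3 :: real
  where "r1 < 0" "0 < r2" "r2 < 1" "1 < r3"
    and "\<And>x. dss_cubic l x = 0 \<longleftrightarrow> x = r1 \<or> x = r2 \<or> x = r3" and "r1 + r2 + r3 = 1"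
proof -
  let ?p = "dss_cubic l :: real \<Rightarrow> real"
  have cont: "continuous_on S ?p" for S
    unfolding dss_cubic_eq by (intro continuous_intros)
  have p0: "?p 0 = 1" and p1: "?p 1 = - real l"
    by (simp_all add: dss_cubic_eq)
  have p_right: "?p (real l + 2) > 0"
  proof -
    have "?p (real l + 2) = (real l + 2) * (real l + 1)^2 + 1"
      by (simp add: dss_cubic_eq algebra_simps power2_eq_square power3_eq_cube)
    then show ?thesis by (simp add: add_pos_nonneg)
  qed
  have p_left: "?p (- real l - 2) < 0"
  proof -
    have "?p (- real l - 2) = 1 - (real l + 2) * ((real l + 2)^2 + 1)"
      by (simp add: dss_cubic_eq algebra_simps power2_eq_square power3_eq_cube)
    moreover have "(real l + 2) * ((real l + 2)^2 + 1) \<ge> 2 * 1"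
      by (rule mult_mono) auto
    ultimately show ?thesis by simp
  qed
  obtain r1 where "- real l - 2 \<le> r1" "r1 \<le> 0" and r1: "?p r1 = 0"
    using IVT'[of ?p "- real l - 2" 0 0] p_left p0 cont by auto
  obtain r2 where "0 \<le> r2" "r2 \<le> 1" and r2: "?p r2 = 0"
    using IVT2'[of ?p 1 0 0] p0 p1 cont by auto
  obtain r3 where "1 \<le> r3" "r3 \<le> real l + 2" and r3: "?p r3 = 0"
    using IVT'[of ?p 1 0 "real l + 2"] p1 p_right cont by auto
  have "r1 < 0" "0 < r2" "r2 < 1" "1 < r3"
    using \<open>r1 \<le> 0\<close> \<open>0 \<le> r2\<close> \<open>r2 \<le> 1\<close> \<open>1 \<le> r3\<close> r1 r2 r3 p0 p1 assms
    by (auto simp: order.order_iff_strict)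
  have sum: "x + y + z = 1" if "?p x = 0" "?p y = 0" "?p z = 0" "x \<noteq> y" "x \<noteq> z" "y \<noteq> z" for x y z
    using cubic_distinct_roots_sum[of _ _ _ x y z] that by (simp add: dss_cubic_def)
  have "r1 + r2 + r3 = 1"
    using sum r1 r2 r3 \<open>r1 < 0\<close> \<open>0 < r2\<close> \<open>r2 < 1\<close> \<open>1 < r3\<close> by auto
  moreover have "?p x = 0 \<longleftrightarrow> x = r1 \<or> x = r2 \<or> x = r3" for x
    using sum[of x r1 r2] \<open>r1 + r2 + r3 = 1\<close> r1 r2 r3 \<open>r1 < 0\<close> \<open>0 < r2\<close> by force
  ultimately show ?thesis
    using that \<open>r1 < 0\<close> \<open>0 < r2\<close> \<open>r2 < 1\<close> \<open>1 < r3\<close> by blast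
qed

lemma dss_adj_mat_mult_vec_nth:
  assumes "v \<in> carrier_vec (2 + 2*l + 2*m)" "u < 2 + 2*l + 2*m"
  shows "(dss_adj_mat l m *\<^sub>v v) $ u = (\<Sum>w | w < 2 + 2*l + 2*m \<and> dss_adj l m u w. v $ w)"
proof -
  let ?N = "2 + 2*l + 2*m"
  have dim: "dim_vec v = ?N" using assms(1) by (rule carrier_vecD)
  have "(dss_adj_mat l m *\<^sub>v v) $ u = row (dss_adj_mat l m) u \<bullet> v"
    using assms(2) by (simp add: dss_adj_mat_def)
  also have "\<dots> = (\<Sum>w\<in>{0..<?N}. row (dss_adj_mat l m) u $ w * v $ w)"
    unfolding scalar_prod_def dim ..
  also have "\<dots> = (\<Sum>w\<in>{0..<?N}. if dss_adj l m u w then v $ w else 0)"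
    by (rule sum.cong) (use assms in \<open>auto simp: dss_adj_mat_def\<close>)
  also have "\<dots> = (\<Sum>w | w < ?N \<and> dss_adj l m u w. v $ w)"
    by (simp add: sum.If_cases Collect_conj_eq atLeast0LessThan lessThan_def Int_commute)
  finally show ?thesis .
qed

lemma dss_neighbours_hub0:
  "{w. w < 2 + 2*l + 2*m \<and> dss_adj l m 0 w} = insert 1 {2..<2+l}"
  by (auto simp: dss_adj_def dss_edge0_def; presburger)

lemma dss_neighbours_hub1:
  "{w. w < 2 + 2*l + 2*m \<and> dss_adj l m 1 w} = insert 0 {2+2*l..<2+2*l+m}"
  by (auto simp: dss_adj_def dss_edge0_def; presburger)

lemma dss_neighbours_mid0:
  "i < l \<Longrightarrow> {w. w < 2 + 2*l + 2*m \<and> dss_adj l m (2+i) w} = {0, 2+l+i}"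
  by (auto simp: dss_adj_def dss_edge0_def)

lemma dss_neighbours_leaf0:
  "i < l \<Longrightarrow> {w. w < 2 + 2*l + 2*m \<and> dss_adj l m (2+l+i) w} = {2+i}"
  by (auto simp: dss_adj_def dss_edge0_def)

lemma dss_neighbours_mid1:
  "j < m \<Longrightarrow> {w. w < 2 + 2*l + 2*m \<and> dss_adj l m (2+2*l+j) w} = {1, 2+2*l+m+j}"
  by (auto simp: dss_adj_def dss_edge0_def)

lemma dss_neighbours_leaf1:
  "j < m \<Longrightarrow> {w. w < 2 + 2*l + 2*m \<and> dss_adj l m (2+2*l+m+j) w} = {2+2*l+j}"
  by (auto simp: dss_adj_def dss_edge0_def)

lemma dss_vertex_cases:
  fixes u :: nat
  assumes "u < 2 + 2*l + 2*m"
  obtains "u = 0" | "u = 1"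
    | i where "i < l" "u = 2 + i" | i where "i < l" "u = 2 + l + i"
    | j where "j < m" "u = 2 + 2*l + j" | j where "j < m" "u = 2 + 2*l + m + j"
proof -
  consider "u < 2" | "2 \<le> u" "u < 2 + l" | "2 + l \<le> u" "u < 2 + 2*l"
    | "2 + 2*l \<le> u" "u < 2 + 2*l + m" | "2 + 2*l + m \<le> u"
    by linarith
  then show ?thesis
  proof cases
    case 1 then show ?thesis using that(1,2) by linarith
  next
    case 2 then show ?thesis using that(3)[of "u - 2"] by simp
  next
    case 3 then show ?thesis using that(4)[of "u - 2 - l"] by simp
  next
    case 4 then show ?thesis using that(5)[of "u - 2 - 2*l"] by simp
  next
    case 5 then show ?thesis using that(6)[of "u - 2 - 2*l - m"] assms by simp
  qed
qed

lemma dss_eigenvector_relations: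
  fixes k :: real
  assumes v: "v \<in> carrier_vec (2 + 2*l + 2*m)" and eigen: "dss_adj_mat l m *\<^sub>v v = k \<cdot>\<^sub>v v"
  defines "D \<equiv> k^2 - 1"
  shows dss_eigen_mid0: "i < l \<Longrightarrow> D * v $ (2+i) = k * v $ 0"
    and dss_eigen_leaf0: "i < l \<Longrightarrow> D * v $ (2+l+i) = v $ 0"
    and dss_eigen_mid1: "j < m \<Longrightarrow> D * v $ (2+2*l+j) = k * v $ 1"
    and dss_eigen_leaf1: "j < m \<Longrightarrow> D * v $ (2+2*l+m+j) = v $ 1"
    and dss_eigen_hub0: "(k^3 - (real l + 1) * k) * v $ 0 = D * v $ 1"
    and dss_eigen_hub1: "(k^3 - (real m + 1) * k) * v $ 1 = D * v $ 0"
proof -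
  let ?N = "2 + 2*l + 2*m"
  have local_eq: "(\<Sum>w | w < ?N \<and> dss_adj l m u w. v $ w) = k * v $ u" if "u < ?N" for u
    using dss_adj_mat_mult_vec_nth[OF v that] arg_cong[OF eigen, of "\<lambda>x. x $ u"] v that by simp
  have arm0: "D * v $ (2+l+i) = v $ 0 \<and> D * v $ (2+i) = k * v $ 0" if "i < l" for i
  proof -
    from that have "2+i < ?N" "2+l+i < ?N" by simp_all
    from local_eq[OF this(1)] local_eq[OF this(2)]
    have "v $ 0 + v $ (2+l+i) = k * v $ (2+i)" "v $ (2+i) = k * v $ (2+l+i)"
      unfolding dss_neighbours_mid0[OF that] dss_neighbours_leaf0[OF that] by simp_all
    from pendant_path_eigen[OF this] show ?thesis by (simp add: D_def)
  qed
  have arm1: "D * v $ (2+2*l+m+j) = v $ 1 \<and> D * v $ (2+2*l+j) = k * v $ 1" if "j < m" for j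
  proof -
    from that have "2+2*l+j < ?N" "2+2*l+m+j < ?N" by simp_all
    from local_eq[OF this(1)] local_eq[OF this(2)]
    have "v $ 1 + v $ (2+2*l+m+j) = k * v $ (2+2*l+j)" "v $ (2+2*l+j) = k * v $ (2+2*l+m+j)"
      unfolding dss_neighbours_mid1[OF that] dss_neighbours_leaf1[OF that] by simp_all
    from pendant_path_eigen[OF this] show ?thesis by (simp add: D_def)
  qed
  show "D * v $ (2+i) = k * v $ 0" "D * v $ (2+l+i) = v $ 0" if "i < l" using arm0[OF that] by auto
  show "D * v $ (2+2*l+j) = k * v $ 1" "D * v $ (2+2*l+m+j) = v $ 1" if "j < m"
    using arm1[OF that] by auto
  have "v $ 1 + (\<Sum>w\<in>{2..<2+l}. v $ w) = k * v $ 0"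
    using local_eq[of 0] unfolding dss_neighbours_hub0 by (simp del: sum.op_ivl_Suc)
  moreover have "(k^2 - 1) * v $ w = k * v $ 0" if w: "w \<in> {2..<2+l}" for w
  proof -
    obtain i where "w = 2 + i" using w le_Suc_ex[of 2 w] by auto
    with w arm0[of i] show ?thesis by (simp add: D_def)
  qed
  ultimately show "(k^3 - (real l + 1) * k) * v $ 0 = D * v $ 1"
    using hub_eigen[of "{2..<2+l}"] by (simp add: D_def)
  have "v $ 0 + (\<Sum>w\<in>{2+2*l..<2+2*l+m}. v $ w) = k * v $ 1"
    using local_eq[of 1] unfolding dss_neighbours_hub1 by (simp del: sum.op_ivl_Suc)
  moreover have "(k^2 - 1) * v $ w = k * v $ 1" if w: "w \<in> {2+2*l..<2+2*l+m}" for w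
  proof -
    obtain j where "w = 2 + 2*l + j" using w le_Suc_ex[of "2 + 2*l" w] by auto
    with w arm1[of j] show ?thesis by (simp add: D_def)
  qed
  ultimately show "(k^3 - (real m + 1) * k) * v $ 1 = D * v $ 0"
    using hub_eigen[of "{2+2*l..<2+2*l+m}"] by (simp add: D_def)
qed

lemma dss_eigenvalue_equation:
  fixes k :: real
  assumes "eigenvalue (dss_adj_mat l m) k" and "k^2 \<noteq> 1"
  shows "(k^3 - (real l + 1) * k) * (k^3 - (real m + 1) * k) = (k^2 - 1)^2"
proof -
  let ?N = "2 + 2*l + 2*m"
  obtain v where v: "v \<in> carrier_vec ?N" "v \<noteq> 0\<^sub>v ?N" "dss_adj_mat l m *\<^sub>v v = k \<cdot>\<^sub>v v"
    using assms(1) by (auto simp: eigenvalue_def eigenvector_def dss_adj_mat_def)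
  define D hl hm where "D = k^2 - 1"
    and "hl = k^3 - (real l + 1) * k" and "hm = k^3 - (real m + 1) * k"
  have "D \<noteq> 0" using assms(2) by (simp add: D_def)
  note arms = dss_eigen_mid0[OF v(1,3), folded D_def] dss_eigen_leaf0[OF v(1,3), folded D_def]
    dss_eigen_mid1[OF v(1,3), folded D_def] dss_eigen_leaf1[OF v(1,3), folded D_def]
  note hub0 = dss_eigen_hub0[OF v(1,3), folded D_def hl_def]
  note hub1 = dss_eigen_hub1[OF v(1,3), folded D_def hm_def]
  have "v $ 0 \<noteq> 0 \<or> v $ 1 \<noteq> 0"
  proof (rule ccontr)
    assume "\<not> (v $ 0 \<noteq> 0 \<or> v $ 1 \<noteq> 0)"
    then have hubs: "v $ 0 = 0" "v $ 1 = 0" by auto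
    have "v = 0\<^sub>v ?N"
    proof (rule eq_vecI)
      fix u assume "u < dim_vec (0\<^sub>v ?N :: real vec)"
      then have "u < ?N" by simp
      then show "v $ u = 0\<^sub>v ?N $ u"
        by (cases rule: dss_vertex_cases) (use arms hubs \<open>D \<noteq> 0\<close> in auto)
    qed (use v(1) in simp)
    with v(2) show False ..
  qed
  moreover have "hl * hm * v $ 0 = D^2 * v $ 0"
  proof -
    have "hl * hm * v $ 0 = hm * (hl * v $ 0)" by (simp add: ac_simps)
    also have "\<dots> = D * (hm * v $ 1)" using hub0 by (simp add: ac_simps)
    also have "\<dots> = D^2 * v $ 0" using hub1 by (simp add: power2_eq_square)
    finally show ?thesis .
  qed
  moreover have "hl * hm * v $ 1 = D^2 * v $ 1"
  proof -
    have "hl * hm * v $ 1 = hl * (hm * v $ 1)" by (simp add: ac_simps)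
    also have "\<dots> = D * (hl * v $ 0)" using hub1 by (simp add: ac_simps)
    also have "\<dots> = D^2 * v $ 1" using hub0 by (simp add: power2_eq_square)
    finally show ?thesis .
  qed
  ultimately show ?thesis unfolding D_def hl_def hm_def by auto
qed

lemma dss_eigenvalue_cases:
  fixes k :: real
  assumes "eigenvalue (dss_adj_mat l l) k"
  shows "k^2 = 1 \<or> dss_cubic l k = 0 \<or> dss_cubic l (- k) = 0"
proof -
  define h D where "h = k^3 - (real l + 1) * k" and "D = k^2 - 1"
  have "h - D = dss_cubic l k" "h + D = - dss_cubic l (- k)"
    by (simp_all add: h_def D_def dss_cubic_eq algebra_simps)
  moreover have "k^2 \<noteq> 1 \<Longrightarrow> (h - D) * (h + D) = 0"
    using dss_eigenvalue_equation[OF assms] by (simp add: h_def D_def algebra_simps power2_eq_square)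
  ultimately show ?thesis by auto
qed

theorem corollary2p3:
  fixes l :: nat and \<mu> :: real
  assumes "l \<ge> 1"
    and "\<mu> \<in> {x. eigenvalue (dss_adj_mat l l) x \<and> x > 0}"
  shows "rat_lin_indep ({x. eigenvalue (dss_adj_mat l l) x \<and> x > 0} - {\<mu>})"
proof -
  obtain r1 r2 r3 :: real where r: "r1 < 0" "0 < r2" "r2 < 1" "1 < r3"
    and roots: "\<And>x. dss_cubic l x = 0 \<longleftrightarrow> x = r1 \<or> x = r2 \<or> x = r3" and "r1 + r2 + r3 = 1"
    using dss_cubic_roots[OF assms(1)] by blast
  have indep: "A = 0 \<and> B = 0 \<and> C = 0" if "of_rat A + of_rat B * r2 + of_rat C * r3 = 0" for A B C
    using cubic_roots_rat_independent[OF dss_cubic_no_rat_root[OF assms(1), unfolded dss_cubic_def],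
        where r = r2 and t = r3] roots[of r2] roots[of r3] r that
    unfolding dss_cubic_def by auto
  have eigenvalues: "{x. eigenvalue (dss_adj_mat l l) x \<and> x > 0} \<subseteq> {1, r2, r3, r2 + r3 - 1}"
  proof
    fix k assume "k \<in> {x. eigenvalue (dss_adj_mat l l) x \<and> x > 0}"
    then have "eigenvalue (dss_adj_mat l l) k" "k > 0" by auto
    \<comment> \<open>The negative root r1 of the cubic contributes the eigenvalue -r1 = r2 + r3 - 1.\<close>
    with dss_eigenvalue_cases[OF this(1)] roots[of k] roots[of "- k"] r \<open>r1 + r2 + r3 = 1\<close>
    show "k \<in> {1, r2, r3, r2 + r3 - 1}"
      by (auto simp: power2_eq_1_iff)
  qed
  moreover have "\<mu> \<in> {1, r2, r3, r2 + r3 - 1}"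
    using assms(2) eigenvalues by blast
  ultimately show ?thesis
    using rat_lin_indep_mono[OF rat_lin_indep_remove_one[OF indep]] by (meson Diff_mono order_refl)
qed

end
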